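(* Let $G=(V,E)$ be a finite connected chordal (decomposable) graph with $V=\{1,\dots,n\}$, and let $(C_1,\dots,C_k)$ be a perfect ordering of its cliques. For $q=2,\dots,k$ let $H_q=C_1\cup\dots\cup C_q$ (with $H_1=C_1$), $S_q=C_q\cap H_{q-1}$, $A_q=H_{q-1}\setminus S_q$ and $B_q=C_q\setminus S_q$. Let $N$ be a symmetric positive definite $n\times n$ real matrix and $M=N_G$. Then $M$ is positive definite if and only if for every $2\le q\le k$, $$S_1^{(q)}+S_2^{(q)}-M_{S_qS_q}$$ is positive definite, where $S_1^{(q)}=M_{S_qS_q}-M_{S_qA_q}M_{A_qA_q}^{-1}M_{A_qS_q}$ and $S_2^{(q)}=M_{S_qS_q}-M_{S_qB_q}M_{B_qB_q}^{-1}M_{B_qS_q}$.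
   Context: A graph is chordal (decomposable) if it has no induced cycle of length $\ge 4$. A clique is a maximal complete induced subgraph (identified with its vertex set). An ordering $(C_1,\dots,C_k)$ of the cliques is perfect if for every $q=2,\dots,k$ there exists $p\le q-1$ with $C_q\cap (C_1\cup\dots\cup C_{q-1})\subseteq C_p$. For a symmetric $n\times n$ real matrix $N=(n_{ij})$, $N_G$ is defined by $(N_G)_{ij}=n_{ij}$ if $i=j$ or $(i,j)\in E$, and $0$ otherwise. For $X,Y\subseteq V$, $M_{XY}$ is the submatrix of $M$ with rows in $X$ and columns in $Y$. *)

theory Defs
  imports Complex_Main
begin

(* Simple graphs on a finite vertex set V with edge set E of ordered pairs
   (symmetric, irreflexive). Matrices are functions nat => nat => real,
   considered on explicit finite index sets. *)

definition simple_graph :: "nat set \<Rightarrow> (nat \<times> nat) set \<Rightarrow> bool" where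
  "simple_graph V E \<longleftrightarrow> E \<subseteq> V \<times> V \<and> (\<forall>i j. (i, j) \<in> E \<longrightarrow> (j, i) \<in> E) \<and> (\<forall>i. (i, i) \<notin> E)"

definition connected_graph :: "nat set \<Rightarrow> (nat \<times> nat) set \<Rightarrow> bool" where
  "connected_graph V E \<longleftrightarrow> (\<forall>u\<in>V. \<forall>v\<in>V. (u, v) \<in> (E \<inter> (V \<times> V))\<^sup>*)"

definition induced_cycle :: "(nat \<times> nat) set \<Rightarrow> nat list \<Rightarrow> bool" where
  "induced_cycle E vs \<longleftrightarrow> distinct vs \<and> length vs \<ge> 3 \<and>
     (\<forall>i < length vs. \<forall>j < length vs.
        ((vs ! i, vs ! j) \<in> E \<longleftrightarrow> (j = Suc i mod length vs \<or> i = Suc j mod length vs)))"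

definition chordal :: "nat set \<Rightarrow> (nat \<times> nat) set \<Rightarrow> bool" where
  "chordal V E \<longleftrightarrow> \<not> (\<exists>vs. set vs \<subseteq> V \<and> length vs \<ge> 4 \<and> induced_cycle E vs)"

definition complete_set :: "nat set \<Rightarrow> (nat \<times> nat) set \<Rightarrow> nat set \<Rightarrow> bool" where
  "complete_set V E C \<longleftrightarrow> C \<subseteq> V \<and> (\<forall>i\<in>C. \<forall>j\<in>C. i \<noteq> j \<longrightarrow> (i, j) \<in> E)"

definition is_clique :: "nat set \<Rightarrow> (nat \<times> nat) set \<Rightarrow> nat set \<Rightarrow> bool" where
  "is_clique V E C \<longleftrightarrow> complete_set V E C \<and> (\<forall>D. complete_set V E D \<and> C \<subseteq> D \<longrightarrow> D = C)"

definition clique_ordering :: "nat set \<Rightarrow> (nat \<times> nat) set \<Rightarrow> nat set list \<Rightarrow> bool" where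
  "clique_ordering V E Cs \<longleftrightarrow> distinct Cs \<and> set Cs = {C. is_clique V E C}"

(* perfect ordering; paper index q = list index q+1 *)
definition perfect_ordering :: "nat set \<Rightarrow> (nat \<times> nat) set \<Rightarrow> nat set list \<Rightarrow> bool" where
  "perfect_ordering V E Cs \<longleftrightarrow> clique_ordering V E Cs \<and>
     (\<forall>q. 1 \<le> q \<and> q < length Cs \<longrightarrow>
        (\<exists>p < q. Cs ! q \<inter> \<Union> (set (take q Cs)) \<subseteq> Cs ! p))"

definition sym_on :: "nat set \<Rightarrow> (nat \<Rightarrow> nat \<Rightarrow> real) \<Rightarrow> bool" where
  "sym_on I M \<longleftrightarrow> (\<forall>i\<in>I. \<forall>j\<in>I. M i j = M j i)"

definition pos_def_on :: "nat set \<Rightarrow> (nat \<Rightarrow> nat \<Rightarrow> real) \<Rightarrow> bool" where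
  "pos_def_on I M \<longleftrightarrow> sym_on I M \<and>
     (\<forall>x :: nat \<Rightarrow> real. (\<exists>i\<in>I. x i \<noteq> 0) \<longrightarrow> (\<Sum>i\<in>I. \<Sum>j\<in>I. x i * M i j * x j) > 0)"

definition mat_mul_on :: "nat set \<Rightarrow> (nat \<Rightarrow> nat \<Rightarrow> real) \<Rightarrow> (nat \<Rightarrow> nat \<Rightarrow> real) \<Rightarrow> nat \<Rightarrow> nat \<Rightarrow> real" where
  "mat_mul_on K X Y = (\<lambda>i j. \<Sum>k\<in>K. X i k * Y k j)"

(* inverse of the submatrix M_AA (indexed by A); unspecified if singular *)
definition mat_inv_on :: "nat set \<Rightarrow> (nat \<Rightarrow> nat \<Rightarrow> real) \<Rightarrow> nat \<Rightarrow> nat \<Rightarrow> real" where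
  "mat_inv_on A M = (SOME P. \<forall>i\<in>A. \<forall>j\<in>A.
       (\<Sum>k\<in>A. M i k * P k j) = (if i = j then 1 else 0) \<and>
       (\<Sum>k\<in>A. P i k * M k j) = (if i = j then 1 else 0))"

definition schur_on :: "nat set \<Rightarrow> (nat \<Rightarrow> nat \<Rightarrow> real) \<Rightarrow> nat \<Rightarrow> nat \<Rightarrow> real" where
  "schur_on A M = (\<lambda>i j. M i j - mat_mul_on A (mat_mul_on A M (mat_inv_on A M)) M i j)"

definition graph_restrict :: "(nat \<times> nat) set \<Rightarrow> (nat \<Rightarrow> nat \<Rightarrow> real) \<Rightarrow> nat \<Rightarrow> nat \<Rightarrow> real" where
  "graph_restrict E N = (\<lambda>i j. if i = j \<or> (i, j) \<in> E then N i j else 0)"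

end

theory Submission
  imports Defs
begin

text \<open>An edge
  between A_q and B_q would lie in some clique, and the running intersection property forbids a
  clique meeting both, hence M(A_q, B_q) = 0. Each clique block of M = N_G agrees with N and is
  positive definite. Taking the Schur complement of A_q and then that of B_q shows that M is
  positive definite on H_q iff it is so on H_(q-1) and on S_q with the matrix
  S_1 + S_2 - M(S_q, S_q), the two complements not interacting because M(A_q, B_q) = 0.
  Induction on q gives the theorem.\<close>

definition mat_vec_on :: "nat set \<Rightarrow> (nat \<Rightarrow> nat \<Rightarrow> real) \<Rightarrow> (nat \<Rightarrow> real) \<Rightarrow> nat \<Rightarrow> real" where
  "mat_vec_on A M x = (\<lambda>i. \<Sum>j\<in>A. M i j * x j)"

definition inner_on :: "nat set \<Rightarrow> (nat \<Rightarrow> real) \<Rightarrow> (nat \<Rightarrow> real) \<Rightarrow> real" where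
  "inner_on A x y = (\<Sum>i\<in>A. x i * y i)"

definition quad_form_on :: "nat set \<Rightarrow> (nat \<Rightarrow> nat \<Rightarrow> real) \<Rightarrow> (nat \<Rightarrow> real) \<Rightarrow> real" where
  "quad_form_on A M x = (\<Sum>i\<in>A. \<Sum>j\<in>A. x i * M i j * x j)"

definition inverse_on :: "nat set \<Rightarrow> (nat \<Rightarrow> nat \<Rightarrow> real) \<Rightarrow> (nat \<Rightarrow> nat \<Rightarrow> real) \<Rightarrow> bool" where
  "inverse_on A M P \<longleftrightarrow> (\<forall>i\<in>A. \<forall>j\<in>A.
       (\<Sum>k\<in>A. M i k * P k j) = (if i = j then 1 else 0) \<and>
       (\<Sum>k\<in>A. P i k * M k j) = (if i = j then 1 else 0))"

lemma quad_form_on_eq_inner_on: "quad_form_on A M x = inner_on A x (mat_vec_on A M x)"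
  unfolding quad_form_on_def inner_on_def mat_vec_on_def by (simp add: sum_distrib_left mult.assoc)

lemma quad_form_on_cong:
  "(\<And>i. i \<in> A \<Longrightarrow> x i = y i) \<Longrightarrow> (\<And>i j. i \<in> A \<Longrightarrow> j \<in> A \<Longrightarrow> M i j = M' i j) \<Longrightarrow>
   quad_form_on A M x = quad_form_on A M' y"
  unfolding quad_form_on_def by (intro sum.cong) auto

lemma quad_form_on_zero: "(\<And>i. i \<in> A \<Longrightarrow> x i = 0) \<Longrightarrow> quad_form_on A M x = 0"
  unfolding quad_form_on_def by simp

lemma inner_on_cong:
  "(\<And>i. i \<in> A \<Longrightarrow> x i = x' i) \<Longrightarrow> (\<And>i. i \<in> A \<Longrightarrow> y i = y' i) \<Longrightarrow> inner_on A x y = inner_on A x' y'"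
  unfolding inner_on_def by (intro sum.cong) auto

lemma inner_on_union:
  "finite A \<Longrightarrow> finite B \<Longrightarrow> A \<inter> B = {} \<Longrightarrow> inner_on (A \<union> B) x y = inner_on A x y + inner_on B x y"
  unfolding inner_on_def by (rule sum.union_disjoint)

lemma mat_vec_on_union:
  "finite A \<Longrightarrow> finite B \<Longrightarrow> A \<inter> B = {} \<Longrightarrow>
   mat_vec_on (A \<union> B) M x = (\<lambda>i. mat_vec_on A M x i + mat_vec_on B M x i)"
  unfolding mat_vec_on_def by (simp add: sum.union_disjoint)

lemma inner_on_add_left: "inner_on A (\<lambda>i. x i + y i) z = inner_on A x z + inner_on A y z"
  unfolding inner_on_def by (simp add: distrib_right sum.distrib)

lemma inner_on_add_right: "inner_on A x (\<lambda>i. y i + z i) = inner_on A x y + inner_on A x z"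
  unfolding inner_on_def by (simp add: distrib_left sum.distrib)

lemma mat_vec_on_add: "mat_vec_on A M (\<lambda>i. x i + y i) i = mat_vec_on A M x i + mat_vec_on A M y i"
  unfolding mat_vec_on_def by (simp add: distrib_left sum.distrib)

lemma inner_on_mat_vec_on_swap:
  assumes "\<And>i j. i \<in> A \<Longrightarrow> j \<in> B \<Longrightarrow> M i j = M j i"
  shows "inner_on A x (mat_vec_on B M y) = inner_on B y (mat_vec_on A M x)"
proof -
  have "inner_on A x (mat_vec_on B M y) = (\<Sum>i\<in>A. \<Sum>j\<in>B. x i * M i j * y j)"
    unfolding inner_on_def mat_vec_on_def by (simp add: sum_distrib_left mult.assoc)
  also have "\<dots> = (\<Sum>j\<in>B. \<Sum>i\<in>A. x i * M i j * y j)" by (rule sum.swap)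
  also have "\<dots> = inner_on B y (mat_vec_on A M x)"
    unfolding inner_on_def mat_vec_on_def using assms
    by (auto simp: sum_distrib_left mult_ac intro!: sum.cong)
  finally show ?thesis .
qed

lemma mat_vec_on_mat_mul_on:
  "mat_vec_on B (mat_mul_on A X Y) x = mat_vec_on A X (mat_vec_on B Y x)"
  unfolding mat_vec_on_def mat_mul_on_def
  by (rule ext) (simp add: sum_distrib_left sum_distrib_right mult.assoc sum.swap[of _ B])

lemma mat_vec_on_inverse_on:
  assumes "inverse_on A M P" "finite A" "i \<in> A"
  shows "mat_vec_on A M (mat_vec_on A P b) i = b i"
proof -
  have "mat_vec_on A M (mat_vec_on A P b) i = mat_vec_on A (mat_mul_on A M P) b i"
    by (simp add: mat_vec_on_mat_mul_on)
  also have "\<dots> = (\<Sum>l\<in>A. if l = i then b l else 0)"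
    using assms unfolding mat_vec_on_def mat_mul_on_def inverse_on_def by (intro sum.cong) auto
  also have "\<dots> = b i" using assms by (simp add: sum.delta)
  finally show ?thesis .
qed

lemma pos_def_on_iff:
  "pos_def_on A M \<longleftrightarrow> sym_on A M \<and> (\<forall>x. (\<exists>i\<in>A. x i \<noteq> 0) \<longrightarrow> quad_form_on A M x > 0)"
  unfolding pos_def_on_def quad_form_on_def ..

lemma pos_def_on_empty: "pos_def_on {} M"
  unfolding pos_def_on_def sym_on_def by simp

lemma quad_form_on_nonneg: "pos_def_on A M \<Longrightarrow> quad_form_on A M x \<ge> 0"
  unfolding pos_def_on_iff by (cases "\<exists>i\<in>A. x i \<noteq> 0") (auto simp: quad_form_on_zero less_imp_le)

lemma pos_def_on_cong:
  assumes "\<And>i j. i \<in> A \<Longrightarrow> j \<in> A \<Longrightarrow> M i j = M' i j"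
  shows "pos_def_on A M \<longleftrightarrow> pos_def_on A M'"
proof -
  have "quad_form_on A M x = quad_form_on A M' x" for x by (rule quad_form_on_cong) (auto simp: assms)
  then show ?thesis unfolding pos_def_on_iff sym_on_def using assms by auto
qed

lemma pos_def_on_subset:
  assumes pd: "pos_def_on B M" and "A \<subseteq> B" "finite B"
  shows "pos_def_on A M"
  unfolding pos_def_on_iff
proof (intro conjI allI impI)
  show "sym_on A M" using assms unfolding pos_def_on_def sym_on_def by blast
  fix x :: "nat \<Rightarrow> real" assume "\<exists>i\<in>A. x i \<noteq> 0"
  define x' where "x' = (\<lambda>i. if i \<in> A then x i else 0)"
  have "quad_form_on B M x' = (\<Sum>i\<in>A. \<Sum>j\<in>B. x' i * M i j * x' j)"
    unfolding quad_form_on_def using assms by (intro sum.mono_neutral_right) (auto simp: x'_def)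
  also have "\<dots> = quad_form_on A M x'"
    unfolding quad_form_on_def using assms
    by (intro sum.cong refl sum.mono_neutral_right) (auto simp: x'_def)
  also have "\<dots> = quad_form_on A M x" by (rule quad_form_on_cong) (auto simp: x'_def)
  finally have "quad_form_on B M x' = quad_form_on A M x" .
  moreover have "\<exists>i\<in>B. x' i \<noteq> 0"
    using \<open>\<exists>i\<in>A. x i \<noteq> 0\<close> \<open>A \<subseteq> B\<close> unfolding x'_def by auto
  then have "quad_form_on B M x' > 0" using pd unfolding pos_def_on_iff by blast
  ultimately show "quad_form_on A M x > 0" by simp
qed

lemma mat_inv_on_cong:
  "(\<And>i j. i \<in> A \<Longrightarrow> j \<in> A \<Longrightarrow> M i j = M' i j) \<Longrightarrow> mat_inv_on A M = mat_inv_on A M'"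
  unfolding mat_inv_on_def by (rule arg_cong[where f = Eps], rule ext) (simp cong: sum.cong)

lemma inverse_on_sym:
  assumes inv: "inverse_on A M P" and sym: "sym_on A M" and fin: "finite A"
  shows "sym_on A P"
  unfolding sym_on_def
proof (intro ballI)
  fix i j assume ij: "i \<in> A" "j \<in> A"
  have left: "(\<Sum>k\<in>A. P a k * M k b) = (if a = b then 1 else 0)" if "a \<in> A" "b \<in> A" for a b
    using inv that unfolding inverse_on_def by blast
  \<comment> \<open>Both sides equal the entry (i, j) of P M P^T.\<close>
  have "(\<Sum>k\<in>A. \<Sum>l\<in>A. P i k * M k l * P j l) = (\<Sum>k\<in>A. P i k * (\<Sum>l\<in>A. P j l * M l k))"
    using sym by (auto simp: sum_distrib_left sym_on_def mult_ac intro!: sum.cong)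
  also have "\<dots> = (\<Sum>k\<in>A. if k = j then P i k else 0)" using left ij by (intro sum.cong) auto
  also have "\<dots> = P i j" using ij fin by simp
  finally have "(\<Sum>k\<in>A. \<Sum>l\<in>A. P i k * M k l * P j l) = P i j" .
  moreover have "(\<Sum>k\<in>A. \<Sum>l\<in>A. P i k * M k l * P j l) = (\<Sum>l\<in>A. (\<Sum>k\<in>A. P i k * M k l) * P j l)"
    by (subst sum.swap) (simp add: sum_distrib_right)
  moreover have "\<dots> = (\<Sum>l\<in>A. if l = i then P j l else 0)" using left ij by (intro sum.cong) auto
  moreover have "\<dots> = P j i" using ij fin by simp
  ultimately show "P i j = P j i" by simp
qed

lemma inverse_on_if_sym_right_inverse:
  assumes sym: "sym_on A M" "sym_on A P"
    and right: "\<And>i j. i \<in> A \<Longrightarrow> j \<in> A \<Longrightarrow> (\<Sum>k\<in>A. M i k * P k j) = (if i = j then 1 else 0)"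
  shows "inverse_on A M P"
  unfolding inverse_on_def
proof (intro ballI conjI right)
  fix i j assume ij: "i \<in> A" "j \<in> A"
  have "(\<Sum>k\<in>A. P i k * M k j) = (\<Sum>k\<in>A. M j k * P k i)"
    using ij sym unfolding sym_on_def by (intro sum.cong) (auto simp: mult.commute)
  also have "\<dots> = (if i = j then 1 else 0)" using right[OF ij(2,1)] by simp
  finally show "(\<Sum>k\<in>A. P i k * M k j) = (if i = j then 1 else 0)" .
qed

text \<open>Bordering: with u = P M(A, a) and v = (u, -1), the vector M v vanishes on A, so its
  a-entry is -v^T M v; this is minus the Schur complement M(a, a) - M(a, A) u.\<close>
lemma mat_vec_on_insert_bordering:
  assumes fin: "finite A" and a: "a \<notin> A" and inv: "inverse_on A M P"
    and v_def: "v = (\<lambda>k. if k = a then -1 else mat_vec_on A P (\<lambda>l. M l a) k)"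
    and i: "i \<in> insert a A"
  shows "mat_vec_on (insert a A) M v i = (if i = a then - quad_form_on (insert a A) M v else 0)"
proof -
  have Mv_A: "mat_vec_on (insert a A) M v i = 0" if "i \<in> A" for i
  proof -
    have "mat_vec_on (insert a A) M v i = - M i a + mat_vec_on A M v i"
      using fin a by (simp add: mat_vec_on_def v_def)
    also have "mat_vec_on A M v i = mat_vec_on A M (mat_vec_on A P (\<lambda>l. M l a)) i"
      using a unfolding mat_vec_on_def v_def by (intro sum.cong) auto
    also have "\<dots> = M i a" using mat_vec_on_inverse_on[OF inv fin that] .
    finally show ?thesis by simp
  qed
  have "quad_form_on (insert a A) M v = v a * mat_vec_on (insert a A) M v a"
    using fin a Mv_A by (simp add: quad_form_on_eq_inner_on inner_on_def)
  then show ?thesis using Mv_A i by (auto simp: v_def)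
qed

lemma inverse_on_insert:
  assumes fin: "finite A" and a: "a \<notin> A" and sym: "sym_on (insert a A) M"
    and inv: "inverse_on A M P"
    and v_def: "v = (\<lambda>k. if k = a then -1 else mat_vec_on A P (\<lambda>l. M l a) k)"
    and s_def: "s = quad_form_on (insert a A) M v" and s: "s \<noteq> 0"
  shows "inverse_on (insert a A) M (\<lambda>i j. (if i \<in> A \<and> j \<in> A then P i j else 0) + v i * v j / s)"
    (is "inverse_on _ M ?P")
proof -
  have symP: "sym_on A P" using inverse_on_sym[OF inv _ fin] sym unfolding sym_on_def by blast
  note Mv = mat_vec_on_insert_bordering[OF fin a inv v_def, folded s_def]
  have "v a = -1" by (simp add: v_def)
  have Ma_P: "(\<Sum>k\<in>A. M a k * P k j) = v j" if "j \<in> A" for j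
  proof -
    have "M a k * P k j = P j k * M k a" if "k \<in> A" for k
      using that \<open>j \<in> A\<close> sym symP unfolding sym_on_def by (metis insertCI mult.commute)
    then have "(\<Sum>k\<in>A. M a k * P k j) = (\<Sum>k\<in>A. P j k * M k a)" by (rule sum.cong[OF refl])
    also have "\<dots> = v j" using that a unfolding v_def mat_vec_on_def by auto
    finally show ?thesis .
  qed
  have "(\<Sum>k\<in>insert a A. M i k * ?P k j) = (if i = j then 1 else 0)"
    if ij: "i \<in> insert a A" "j \<in> insert a A" for i j
  proof -
    have "(\<Sum>k\<in>insert a A. M i k * ?P k j)
      = (\<Sum>k\<in>insert a A. M i k * (if k \<in> A \<and> j \<in> A then P k j else 0))
        + mat_vec_on (insert a A) M v i * v j / s"
      unfolding mat_vec_on_def sum_distrib_right sum_divide_distrib sum.distrib[symmetric]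
      by (intro sum.cong refl) (simp add: field_simps)
    also have "\<dots> = (if j \<in> A then \<Sum>k\<in>A. M i k * P k j else 0)
        + mat_vec_on (insert a A) M v i * v j / s"
      using fin a by (simp cong: sum.cong)
    also have "\<dots> = (if i = j then 1 else 0)"
    proof (cases "i = a")
      case True
      with ij a s show ?thesis by (auto simp: Ma_P Mv \<open>v a = -1\<close>)
    next
      case False
      with inv ij a show ?thesis by (auto simp: Mv inverse_on_def)
    qed
    finally show ?thesis .
  qed
  moreover have "sym_on (insert a A) ?P"
    using symP unfolding sym_on_def by (simp add: mult.commute)
  ultimately show ?thesis using sym by (intro inverse_on_if_sym_right_inverse)
qed

lemma pos_def_on_imp_inverse_on: "finite A \<Longrightarrow> pos_def_on A M \<Longrightarrow> \<exists>P. inverse_on A M P"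
proof (induction A rule: finite_induct)
  case empty
  show ?case unfolding inverse_on_def by simp
next
  case (insert a A)
  then obtain P where P: "inverse_on A M P"
    using pos_def_on_subset[OF insert.prems] by blast
  define v where "v = (\<lambda>k. if k = a then -1 else mat_vec_on A P (\<lambda>l. M l a) k)"
  have "quad_form_on (insert a A) M v > 0"
    using insert.prems unfolding pos_def_on_iff by (auto simp: v_def)
  moreover have "sym_on (insert a A) M" using insert.prems unfolding pos_def_on_def by blast
  ultimately show ?case using inverse_on_insert[OF insert.hyps(1,2) _ P v_def refl] by auto
qed

lemma inverse_on_mat_inv_on: "finite A \<Longrightarrow> pos_def_on A M \<Longrightarrow> inverse_on A M (mat_inv_on A M)"
  unfolding mat_inv_on_def inverse_on_def[symmetric]
  using pos_def_on_imp_inverse_on by (rule someI_ex)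

lemma schur_on_sym:
  assumes fin: "finite A" and sym: "sym_on (A \<union> T) M" and pd: "pos_def_on A M"
  shows "sym_on T (schur_on A M)"
  unfolding sym_on_def
proof (intro ballI)
  fix i j assume ij: "i \<in> T" "j \<in> T"
  define P where "P = mat_inv_on A M"
  have "sym_on A P"
    using inverse_on_sym[OF inverse_on_mat_inv_on[OF fin pd]] sym fin unfolding P_def sym_on_def by blast
  then have "(\<Sum>k\<in>A. \<Sum>l\<in>A. M j l * P l k * M k i) = (\<Sum>k\<in>A. \<Sum>l\<in>A. M i l * P l k * M k j)"
    using sym ij unfolding sym_on_def by (subst sum.swap) (intro sum.cong refl, simp add: mult_ac)
  then show "schur_on A M i j = schur_on A M j i"
    using sym ij unfolding schur_on_def mat_mul_on_def sym_on_def P_def[symmetric]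
    by (simp add: sum_distrib_right)
qed

lemma quad_form_on_mat_mul_on:
  assumes "\<And>i j. i \<in> A \<Longrightarrow> j \<in> T \<Longrightarrow> M i j = M j i"
  shows "quad_form_on T (mat_mul_on A (mat_mul_on A M P) M) x
    = inner_on A (mat_vec_on A P (mat_vec_on T M x)) (mat_vec_on T M x)"
proof -
  have "quad_form_on T (mat_mul_on A (mat_mul_on A M P) M) x
      = inner_on T x (mat_vec_on A M (mat_vec_on A P (mat_vec_on T M x)))"
    by (simp add: quad_form_on_eq_inner_on mat_vec_on_mat_mul_on)
  also have "\<dots> = inner_on A (mat_vec_on A P (mat_vec_on T M x)) (mat_vec_on T M x)"
    using assms by (intro inner_on_mat_vec_on_swap) metis
  finally show ?thesis .
qed

text \<open>Completing the square.\<close>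
lemma quad_form_on_union_schur:
  fixes x :: "nat \<Rightarrow> real"
  assumes fin: "finite A" "finite T" and dis: "A \<inter> T = {}" and sym: "sym_on (A \<union> T) M"
    and pd: "pos_def_on A M"
  defines "w \<equiv> mat_vec_on A (mat_inv_on A M) (mat_vec_on T M x)"
  shows "quad_form_on (A \<union> T) M x = quad_form_on A M (\<lambda>i. x i + w i) + quad_form_on T (schur_on A M) x"
proof -
  define b where "b = mat_vec_on T M x"
  have symAT: "\<And>i j. i \<in> A \<Longrightarrow> j \<in> T \<Longrightarrow> M i j = M j i"
    and symA: "\<And>i j. i \<in> A \<Longrightarrow> j \<in> A \<Longrightarrow> M i j = M j i"
    using sym unfolding sym_on_def by blast+
  have Mw: "mat_vec_on A M w i = b i" if "i \<in> A" for i
    unfolding w_def b_def using mat_vec_on_inverse_on[OF inverse_on_mat_inv_on[OF fin(1) pd] fin(1) that] .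
  have "quad_form_on (A \<union> T) M x
      = inner_on A x (mat_vec_on A M x) + inner_on A x b + inner_on T x (mat_vec_on A M x) + inner_on T x b"
    by (simp add: quad_form_on_eq_inner_on mat_vec_on_union[OF fin dis] inner_on_union[OF fin dis]
        inner_on_add_right b_def)
  moreover have "inner_on T x (mat_vec_on A M x) = inner_on A x b"
    unfolding b_def using symAT by (intro inner_on_mat_vec_on_swap[symmetric]) metis
  moreover have "quad_form_on A M (\<lambda>i. x i + w i)
      = inner_on A x (mat_vec_on A M x) + inner_on A x b + inner_on A w (mat_vec_on A M x) + inner_on A w b"
  proof -
    have "quad_form_on A M (\<lambda>i. x i + w i) = inner_on A (\<lambda>i. x i + w i) (\<lambda>i. mat_vec_on A M x i + b i)"
      unfolding quad_form_on_eq_inner_on mat_vec_on_add by (rule inner_on_cong) (simp_all add: Mw)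
    then show ?thesis by (simp add: inner_on_add_left inner_on_add_right)
  qed
  moreover have "inner_on A w (mat_vec_on A M x) = inner_on A x b"
  proof -
    have "inner_on A w (mat_vec_on A M x) = inner_on A x (mat_vec_on A M w)"
      using symA by (intro inner_on_mat_vec_on_swap) metis
    also have "\<dots> = inner_on A x b" by (rule inner_on_cong) (simp_all add: Mw)
    finally show ?thesis .
  qed
  moreover have "quad_form_on T (schur_on A M) x = inner_on T x b - inner_on A w b"
  proof -
    have "quad_form_on T (schur_on A M) x
        = quad_form_on T M x - quad_form_on T (mat_mul_on A (mat_mul_on A M (mat_inv_on A M)) M) x"
      unfolding quad_form_on_def schur_on_def by (simp add: algebra_simps sum_subtractf)
    then show ?thesis
      using quad_form_on_mat_mul_on[OF symAT] by (simp add: quad_form_on_eq_inner_on w_def b_def)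
  qed
  ultimately show ?thesis by linarith
qed

lemma pos_def_on_union_iff_schur:
  assumes fin: "finite A" "finite T" and dis: "A \<inter> T = {}" and sym: "sym_on (A \<union> T) M"
    and pd: "pos_def_on A M"
  shows "pos_def_on (A \<union> T) M \<longleftrightarrow> pos_def_on T (schur_on A M)"
proof -
  define w where "w x = mat_vec_on A (mat_inv_on A M) (mat_vec_on T M x)" for x
  have split: "quad_form_on (A \<union> T) M x = quad_form_on A M (\<lambda>i. x i + w x i) + quad_form_on T (schur_on A M) x"
    for x unfolding w_def by (rule quad_form_on_union_schur[OF fin dis sym pd])
  have symS: "sym_on T (schur_on A M)" by (rule schur_on_sym[OF fin(1) sym pd])
  show ?thesis
  proof
    assume L: "pos_def_on (A \<union> T) M"
    have "quad_form_on T (schur_on A M) y > 0" if y: "\<exists>i\<in>T. y i \<noteq> 0" for y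
    proof -
      \<comment> \<open>Extend y to A so that the square on A vanishes.\<close>
      define x where "x i = (if i \<in> T then y i else - w y i)" for i
      have "w x = w y" unfolding w_def mat_vec_on_def x_def by (intro ext sum.cong) auto
      then have "quad_form_on A M (\<lambda>i. x i + w x i) = 0"
        using dis by (intro quad_form_on_zero) (auto simp: x_def)
      moreover have "quad_form_on T (schur_on A M) x = quad_form_on T (schur_on A M) y"
        by (rule quad_form_on_cong) (auto simp: x_def)
      moreover have "\<exists>i\<in>A \<union> T. x i \<noteq> 0" using y by (auto simp: x_def)
      then have "quad_form_on (A \<union> T) M x > 0" using L unfolding pos_def_on_iff by blast
      ultimately show ?thesis using split[of x] by simp
    qed
    with symS show "pos_def_on T (schur_on A M)" unfolding pos_def_on_iff by blast
  next
    assume R: "pos_def_on T (schur_on A M)"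
    have "quad_form_on (A \<union> T) M x > 0" if x: "\<exists>i\<in>A \<union> T. x i \<noteq> 0" for x
    proof (cases "\<exists>i\<in>T. x i \<noteq> 0")
      case True
      then have "quad_form_on T (schur_on A M) x > 0" using R unfolding pos_def_on_iff by blast
      then show ?thesis using split[of x] quad_form_on_nonneg[OF pd, of "\<lambda>i. x i + w x i"] by linarith
    next
      case False
      then have "w x = (\<lambda>i. 0)" unfolding w_def mat_vec_on_def by simp
      then have "quad_form_on A M (\<lambda>i. x i + w x i) > 0" using pd x False unfolding pos_def_on_iff by auto
      moreover have "quad_form_on T (schur_on A M) x = 0" using False by (intro quad_form_on_zero) auto
      ultimately show ?thesis using split[of x] by simp
    qed
    with sym show "pos_def_on (A \<union> T) M" unfolding pos_def_on_iff by blast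
  qed
qed

lemma schur_on_eq_if_uncoupled:
  assumes "\<And>a b. a \<in> A \<Longrightarrow> b \<in> B \<Longrightarrow> M a b = 0 \<and> M b a = 0" and "i \<in> B \<or> j \<in> B"
  shows "schur_on A M i j = M i j"
proof -
  have "mat_mul_on A (mat_mul_on A M (mat_inv_on A M)) M i j = 0"
    using assms(2)
  proof
    assume "i \<in> B"
    then have "mat_mul_on A M (mat_inv_on A M) i k = 0" for k
      unfolding mat_mul_on_def using assms(1) by simp
    then show ?thesis unfolding mat_mul_on_def[of A _ M] by simp
  next
    assume "j \<in> B"
    then show ?thesis unfolding mat_mul_on_def[of A _ M] using assms(1) by simp
  qed
  then show ?thesis unfolding schur_on_def by simp
qed

lemma schur_on_cong_rows_cols:
  assumes "\<And>i j. i \<in> B \<or> j \<in> B \<Longrightarrow> M' i j = M i j"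
  shows "schur_on B M' i j = M' i j + schur_on B M i j - M i j"
proof -
  have "mat_inv_on B M' = mat_inv_on B M" by (rule mat_inv_on_cong) (simp add: assms)
  then have "mat_mul_on B (mat_mul_on B M' (mat_inv_on B M')) M' i j
      = mat_mul_on B (mat_mul_on B M (mat_inv_on B M)) M i j"
    unfolding mat_mul_on_def using assms by (intro sum.cong refl arg_cong2[where f = "(*)"]) auto
  then show ?thesis unfolding schur_on_def by simp
qed

text \<open>Two successive Schur complements, first of A = H - S and then of B = C - S, where
  no entry of M couples A with B.\<close>
lemma pos_def_on_union_uncoupled:
  assumes fin: "finite H" "finite C" and sym: "sym_on (H \<union> C) M" and pdC: "pos_def_on C M"
    and uncoupled: "\<And>a b. a \<in> H - C \<Longrightarrow> b \<in> C - H \<Longrightarrow> M a b = 0 \<and> M b a = 0"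
  shows "pos_def_on (H \<union> C) M \<longleftrightarrow> pos_def_on H M \<and>
    pos_def_on (C \<inter> H) (\<lambda>i j. schur_on (H - C \<inter> H) M i j + schur_on (C - C \<inter> H) M i j - M i j)"
proof -
  define S where "S = C \<inter> H"
  define A where "A = H - S"
  define B where "B = C - S"
  have finite: "finite A" "finite B" "finite S" using fin by (auto simp: A_def B_def S_def)
  have HC: "H \<union> C = A \<union> (S \<union> B)" and H: "H = A \<union> S" and C: "B \<subseteq> C"
    and disj: "A \<inter> (S \<union> B) = {}" "B \<inter> S = {}"
    by (auto simp: A_def B_def S_def)
  have AB: "M a b = 0 \<and> M b a = 0" if "a \<in> A" "b \<in> B" for a b
    using uncoupled that by (auto simp: A_def B_def S_def)
  have schur_A_B: "schur_on A M i j = M i j" if "i \<in> B \<or> j \<in> B" for i j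
    using schur_on_eq_if_uncoupled[OF AB that] .
  have pd_B: "pos_def_on B (schur_on A M)"
    using pos_def_on_subset[OF pdC C fin(2)] by (subst pos_def_on_cong) (simp_all add: schur_A_B)
  have "pos_def_on (H \<union> C) M \<longleftrightarrow>
      pos_def_on S (\<lambda>i j. schur_on A M i j + schur_on B M i j - M i j)"
    if pd_A: "pos_def_on A M"
  proof -
    have sym_A: "sym_on (A \<union> (S \<union> B)) M" using sym HC by simp
    have sym_BS: "sym_on (B \<union> S) (schur_on A M)"
      using schur_on_sym[OF finite(1) sym_A pd_A] by (simp add: Un_commute)
    have "pos_def_on (H \<union> C) M \<longleftrightarrow> pos_def_on (B \<union> S) (schur_on A M)"
      using pos_def_on_union_iff_schur[OF finite(1) _ disj(1) sym_A pd_A] finite HC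
      by (simp add: Un_commute)
    also have "\<dots> \<longleftrightarrow> pos_def_on S (schur_on B (schur_on A M))"
      by (rule pos_def_on_union_iff_schur[OF finite(2,3) disj(2) sym_BS pd_B])
    also have "\<dots> \<longleftrightarrow> pos_def_on S (\<lambda>i j. schur_on A M i j + schur_on B M i j - M i j)"
      using schur_on_cong_rows_cols[of B "schur_on A M" M, OF schur_A_B] by (intro pos_def_on_cong) blast
    finally show ?thesis .
  qed
  moreover have "pos_def_on A M" if "pos_def_on H M"
    using pos_def_on_subset[OF that _ fin(1)] H by blast
  moreover have "pos_def_on H M" if "pos_def_on (H \<union> C) M"
    using pos_def_on_subset[OF that _ finite_UnI[OF fin]] by blast
  ultimately have "pos_def_on (H \<union> C) M \<longleftrightarrow> pos_def_on H M \<and>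
      pos_def_on S (\<lambda>i j. schur_on A M i j + schur_on B M i j - M i j)"
    by blast
  then show ?thesis by (simp only: S_def A_def B_def)
qed

lemma running_intersection_separates:
  assumes rip: "\<And>r. 1 \<le> r \<Longrightarrow> r < length Cs \<Longrightarrow> \<exists>p<r. Cs ! r \<inter> \<Union> (set (take r Cs)) \<subseteq> Cs ! p"
    and a: "a \<in> \<Union> (set (take q Cs)) - Cs ! q" and b: "b \<in> Cs ! q - \<Union> (set (take q Cs))"
    and X: "X \<in> set Cs"
  shows "\<not> (a \<in> X \<and> b \<in> X)"
proof -
  have "\<not> (a \<in> Cs ! r \<and> b \<in> Cs ! r)" if "r < length Cs" for r
    using that
  proof (induction r rule: less_induct)
    case (less r)
    consider "r < q" | "r = q" | "q < r" by linarith
    then show ?case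
    proof cases
      case 1
      then have "Cs ! r \<in> set (take q Cs)" using less.prems by (auto simp: in_set_conv_nth)
      then show ?thesis using b by blast
    next
      case 2
      then show ?thesis using a by blast
    next
      case 3
      \<comment> \<open>Both a and b lie in the history of r, so the running intersection property moves
        the pair into an earlier set.\<close>
      have "a \<in> \<Union> (set (take r Cs))" using a set_take_subset_set_take[of q r Cs] 3 by auto
      moreover have "Cs ! q \<in> set (take r Cs)" using 3 less.prems by (auto simp: in_set_conv_nth)
      then have "b \<in> \<Union> (set (take r Cs))" using b by blast
      moreover obtain p where "p < r" "Cs ! r \<inter> \<Union> (set (take r Cs)) \<subseteq> Cs ! p"
        using rip[of r] 3 less.prems by auto
      ultimately show ?thesis using less.IH[of p] less.prems by auto
    qed
  qed
  then show ?thesis using X by (auto simp: in_set_conv_nth)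
qed

lemma running_intersection_uncoupled:
  assumes rip: "\<And>r. 1 \<le> r \<Longrightarrow> r < length Cs \<Longrightarrow> \<exists>p<r. Cs ! r \<inter> \<Union> (set (take r Cs)) \<subseteq> Cs ! p"
    and support: "\<And>a b. a \<noteq> b \<Longrightarrow> (\<And>C. C \<in> set Cs \<Longrightarrow> \<not> (a \<in> C \<and> b \<in> C)) \<Longrightarrow> M a b = 0"
    and a: "a \<in> \<Union> (set (take q Cs)) - Cs ! q" and b: "b \<in> Cs ! q - \<Union> (set (take q Cs))"
  shows "M a b = 0 \<and> M b a = 0"
proof -
  have sep: "\<not> (a \<in> C \<and> b \<in> C)" if "C \<in> set Cs" for C
    using running_intersection_separates[OF rip a b that] .
  have "a \<noteq> b" using a b by blast
  then show ?thesis using support[of a b] support[of b a] sep by blast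
qed

lemma pos_def_on_Union_running_intersection:
  assumes fin: "finite (\<Union> (set Cs))"
    and rip: "\<And>r. 1 \<le> r \<Longrightarrow> r < length Cs \<Longrightarrow> \<exists>p<r. Cs ! r \<inter> \<Union> (set (take r Cs)) \<subseteq> Cs ! p"
    and sym: "sym_on (\<Union> (set Cs)) M"
    and pd: "\<And>C. C \<in> set Cs \<Longrightarrow> pos_def_on C M"
    and support: "\<And>a b. a \<noteq> b \<Longrightarrow> (\<And>C. C \<in> set Cs \<Longrightarrow> \<not> (a \<in> C \<and> b \<in> C)) \<Longrightarrow> M a b = 0"
  shows "pos_def_on (\<Union> (set Cs)) M \<longleftrightarrow>
    (\<forall>q. 1 \<le> q \<and> q < length Cs \<longrightarrow>
       (let H = \<Union> (set (take q Cs)); S = Cs ! q \<inter> H; A = H - S; B = Cs ! q - S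
        in pos_def_on S (\<lambda>i j. schur_on A M i j + schur_on B M i j - M i j)))"
proof -
  define H where "H k = \<Union> (set (take k Cs))" for k
  define cond where "cond q = pos_def_on (Cs ! q \<inter> H q)
    (\<lambda>i j. schur_on (H q - Cs ! q \<inter> H q) M i j + schur_on (Cs ! q - Cs ! q \<inter> H q) M i j - M i j)" for q
  have "pos_def_on (H k) M \<longleftrightarrow> (\<forall>q<k. cond q)" if "k \<le> length Cs" for k
    using that
  proof (induction k)
    case 0
    show ?case by (simp add: H_def pos_def_on_empty)
  next
    case (Suc k)
    then have k: "k < length Cs" "Cs ! k \<in> set Cs" by simp_all
    have H_Suc: "H (Suc k) = H k \<union> Cs ! k"
      using take_Suc_conv_app_nth[OF k(1)] by (simp add: H_def Un_commute)
    have H_sub: "H k \<subseteq> \<Union> (set Cs)" unfolding H_def by (meson Union_mono set_take_subset)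
    have "pos_def_on (H k \<union> Cs ! k) M \<longleftrightarrow> pos_def_on (H k) M \<and> cond k"
      unfolding cond_def
    proof (rule pos_def_on_union_uncoupled)
      show "finite (H k)" using fin H_sub by (rule finite_subset[rotated])
      show "finite (Cs ! k)" using fin k(2) by (rule finite_subset[rotated, OF _ Union_upper])
      show "sym_on (H k \<union> Cs ! k) M" using sym H_sub k unfolding sym_on_def by blast
      show "pos_def_on (Cs ! k) M" using pd k by blast
      show "M a b = 0 \<and> M b a = 0" if "a \<in> H k - Cs ! k" "b \<in> Cs ! k - H k" for a b
        using running_intersection_uncoupled[OF rip support that[unfolded H_def]] .
    qed
    then show ?case unfolding H_Suc using Suc.IH k(1) by (auto simp: less_Suc_eq)
  qed
  from this[of "length Cs"] have "pos_def_on (\<Union> (set Cs)) M \<longleftrightarrow> (\<forall>q<length Cs. cond q)"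
    by (simp add: H_def)
  moreover have "cond 0" by (simp add: cond_def H_def pos_def_on_empty)
  then have "(\<forall>q<length Cs. cond q) \<longleftrightarrow> (\<forall>q. 1 \<le> q \<and> q < length Cs \<longrightarrow> cond q)"
    by (metis leI less_one)
  ultimately show ?thesis by (simp only: cond_def H_def Let_def)
qed

lemma complete_set_subset_clique:
  assumes "finite V" "complete_set V E D"
  shows "\<exists>C. is_clique V E C \<and> D \<subseteq> C"
proof -
  define F where "F = {X. complete_set V E X \<and> D \<subseteq> X}"
  have "F \<subseteq> Pow V" by (auto simp: F_def complete_set_def)
  then have "finite F" using assms(1) by (simp add: finite_subset)
  moreover have "D \<in> F" using assms(2) by (simp add: F_def)
  ultimately obtain C where "C \<in> F" "D \<subseteq> C" "\<forall>X\<in>F. C \<subseteq> X \<longrightarrow> C = X"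
    using finite_has_maximal2 by blast
  then show ?thesis unfolding is_clique_def F_def by blast
qed

lemma Union_cliques: "finite V \<Longrightarrow> \<Union> {C. is_clique V E C} = V"
  using complete_set_subset_clique[of V E "{v}" for v]
  by (auto simp: is_clique_def complete_set_def)

lemma pos_def_on_graph_restrict_complete_set:
  assumes "pos_def_on V N" "finite V" "complete_set V E C"
  shows "pos_def_on C (graph_restrict E N)"
proof -
  have "pos_def_on C N" using pos_def_on_subset[OF assms(1) _ assms(2)] assms(3) by (simp add: complete_set_def)
  then show ?thesis using assms(3)
    by (subst pos_def_on_cong) (auto simp: graph_restrict_def complete_set_def)
qed

lemma sym_on_graph_restrict:
  assumes "simple_graph V E" "sym_on V N"
  shows "sym_on V (graph_restrict E N)"
  using assms unfolding simple_graph_def sym_on_def graph_restrict_def by metis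

lemma graph_restrict_eq_0_if_no_common_clique:
  assumes "finite V" "simple_graph V E" "a \<noteq> b"
    and "\<And>C. is_clique V E C \<Longrightarrow> \<not> (a \<in> C \<and> b \<in> C)"
  shows "graph_restrict E N a b = 0"
proof -
  have "(a, b) \<notin> E"
  proof
    assume "(a, b) \<in> E"
    then have "complete_set V E {a, b}"
      using assms(2) unfolding simple_graph_def complete_set_def by auto
    then show False using complete_set_subset_clique[OF assms(1)] assms(4) by blast
  qed
  then show ?thesis using assms(3) by (simp add: graph_restrict_def)
qed

theorem theorem6:
  fixes n :: nat and E :: "(nat \<times> nat) set" and Cs :: "nat set list"
    and N :: "nat \<Rightarrow> nat \<Rightarrow> real"
  assumes "simple_graph {1..n} E"
    and "connected_graph {1..n} E"
    and "chordal {1..n} E"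
    and "perfect_ordering {1..n} E Cs"
    and "pos_def_on {1..n} N"
  shows "pos_def_on {1..n} (graph_restrict E N) \<longleftrightarrow>
    (\<forall>q. 1 \<le> q \<and> q < length Cs \<longrightarrow>
       (let M = graph_restrict E N;
            H = \<Union> (set (take q Cs));
            S = Cs ! q \<inter> H;
            A = H - S;
            B = Cs ! q - S
        in pos_def_on S (\<lambda>i j. schur_on A M i j + schur_on B M i j - M i j)))"
proof -
  define V where "V = {1..n}"
  have cliques: "set Cs = {C. is_clique V E C}"
    using assms(4) unfolding perfect_ordering_def clique_ordering_def V_def by blast
  have V: "\<Union> (set Cs) = V" unfolding cliques V_def by (simp add: Union_cliques)
  show ?thesis unfolding V_def[symmetric] V[symmetric] Let_def
  proof (rule pos_def_on_Union_running_intersection[unfolded Let_def])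
    show "finite (\<Union> (set Cs))" by (simp add: V V_def)
    show "\<exists>p<r. Cs ! r \<inter> \<Union> (set (take r Cs)) \<subseteq> Cs ! p" if "1 \<le> r" "r < length Cs" for r
      using assms(4) that unfolding perfect_ordering_def by blast
    show "sym_on (\<Union> (set Cs)) (graph_restrict E N)"
      using assms(1,5) by (simp add: V V_def sym_on_graph_restrict pos_def_on_def)
    show "pos_def_on C (graph_restrict E N)" if "C \<in> set Cs" for C
      using that assms(5) cliques
      by (intro pos_def_on_graph_restrict_complete_set[of V]) (auto simp: V_def is_clique_def)
    show "graph_restrict E N a b = 0"
      if "a \<noteq> b" and "\<And>C. C \<in> set Cs \<Longrightarrow> \<not> (a \<in> C \<and> b \<in> C)" for a b
      using that assms(1) cliques by (intro graph_restrict_eq_0_if_no_common_clique[of V]) (auto simp: V_def)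
  qed
qed

end
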